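(* Consider a run of RLS-GP on the target $\mathrm{AND}_n$ with $F = \{\mathrm{AND}, \mathrm{OR}\}$, $L = \{x_1, \ldots, x_n\}$, a tree size limit $\ell \ge n$, and the complete truth table as fitness. Let $T$ be the number of iterations before the optimum is found, and let $T_0 \le T$ be the number of these iterations in which the parent (current) tree is not full, i.e. has fewer than $\ell$ leaves. Then $E[T_0] = O(\ell\, n \log^2 n)$.
   Context: Programs are finite rooted binary trees (the empty tree is allowed) whose internal nodes are labelled by binary Boolean functions from $F$ and whose leaves are labelled by literals from $L$; a program computes a Boolean function of $(x_1,\dots,x_n)$ in the obvious way. $\mathrm{AND}_n(x) = x_1 \wedge \dots \wedge x_n$. The fitness (to be minimised) of a program $X$ is $f(X) = |\{x \in \{0,1\}^n : X(x) \ne \mathrm{AND}_n(x)\}|$; the optimum is a tree of fitness $0$. LeafCount$(X)$ is the number of leaves of $X$. HVL-Prime with subtree deletion, applied to a tree $X$: choose $op \in \{\mathrm{INS}, \mathrm{DEL}, \mathrm{SUB}\}$, a literal $l \in L$ and a function $g \in F$, independently and uniformly at random. If $X$ is empty, the result is the single leaf $l$. Otherwise: if $op = \mathrm{INS}$, choose a node $x$ of $X$ uniformly at random and replace it by a new node labelled $g$ whose two children are the subtree rooted at $x$ and a new leaf $l$, in uniformly random order; if $op = \mathrm{DEL}$, choose a node $x$ of $X$ (leaf or internal) uniformly at random and replace the parent of $x$ by the sibling of $x$; if $op = \mathrm{SUB}$, choose a leaf of $X$ uniformly at random and replace it by $l$. RLS-GP with tree size limit $\ell$: start with the empty tree $X$;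 in each iteration let $X' := $ HVL-Prime$(X)$, and if LeafCount$(X') \le \ell$ and $f(X') \le f(X)$ then set $X := X'$. Asymptotics are as $n \to \infty$. *)

theory Defs
  imports "HOL-Probability.Probability"
begin

datatype func = FAnd | FOr

text \<open>Programs: possibly empty binary trees; leaves carry literal indices i (meaning x_i, 1 \<le> i \<le> n).
  The constructor GEmpty is only meant to occur as the whole tree.\<close>
datatype gptree = GEmpty | GLeaf nat | GNode func gptree gptree

fun apply_func :: "func \<Rightarrow> bool \<Rightarrow> bool \<Rightarrow> bool" where
  "apply_func FAnd a b = (a \<and> b)"
| "apply_func FOr a b = (a \<or> b)"

fun eval_tree :: "gptree \<Rightarrow> nat set \<Rightarrow> bool" where
  "eval_tree GEmpty S = False"
| "eval_tree (GLeaf i) S = (i \<in> S)"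
| "eval_tree (GNode g a b) S = apply_func g (eval_tree a S) (eval_tree b S)"

text \<open>Inputs x \<in> {0,1}^n are identified with subsets S of {1..n}; AND_n(x) = 1 iff S = {1..n}.
  The empty tree computes no function and is counted wrong on every input (fitness 2^n).\<close>
definition fitness :: "nat \<Rightarrow> gptree \<Rightarrow> nat" where
  "fitness n X = (if X = GEmpty then 2 ^ n
     else card {S. S \<subseteq> {1..n} \<and> eval_tree X S \<noteq> (S = {1..n})})"

fun leaf_count :: "gptree \<Rightarrow> nat" where
  "leaf_count GEmpty = 0"
| "leaf_count (GLeaf i) = 1"
| "leaf_count (GNode g a b) = leaf_count a + leaf_count b"

fun node_count :: "gptree \<Rightarrow> nat" where
  "node_count GEmpty = 0"
| "node_count (GLeaf i) = 1"
| "node_count (GNode g a b) = 1 + node_count a + node_count b"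

text \<open>Nodes are addressed by their preorder index (0 = root). Replace subtree at index k by f of it.\<close>
fun modify_at :: "nat \<Rightarrow> (gptree \<Rightarrow> gptree) \<Rightarrow> gptree \<Rightarrow> gptree" where
  "modify_at 0 f t = f t"
| "modify_at (Suc k) f (GNode g a b) =
     (if k < node_count a then GNode g (modify_at k f a) b
      else GNode g a (modify_at (k - node_count a) f b))"
| "modify_at (Suc k) f t = t"

text \<open>Deletion of the node with preorder index k: its parent is replaced by its sibling.
  The root has no parent; deleting it gives the empty tree (which is never accepted anyway).\<close>
fun del_at :: "nat \<Rightarrow> gptree \<Rightarrow> gptree" where
  "del_at 0 t = GEmpty"
| "del_at (Suc k) (GNode g a b) =
     (if k = 0 then b
      else if k < node_count a then GNode g (del_at k a) b
      else if k = node_count a then a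
      else GNode g a (del_at (k - node_count a) b))"
| "del_at (Suc k) t = t"

text \<open>Substitute the j-th leaf (0-based, left to right) by the literal l.\<close>
fun sub_leaf :: "nat \<Rightarrow> nat \<Rightarrow> gptree \<Rightarrow> gptree" where
  "sub_leaf j l GEmpty = GEmpty"
| "sub_leaf j l (GLeaf i) = GLeaf l"
| "sub_leaf j l (GNode g a b) =
     (if j < leaf_count a then GNode g (sub_leaf j l a) b
      else GNode g a (sub_leaf (j - leaf_count a) l b))"

datatype hvl_op = INS | DEL | SUB

definition hvl_prime :: "nat \<Rightarrow> gptree \<Rightarrow> gptree pmf" where
  "hvl_prime n X = do {
     op \<leftarrow> pmf_of_set {INS, DEL, SUB};
     l \<leftarrow> pmf_of_set {1..n};
     g \<leftarrow> pmf_of_set {FAnd, FOr};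
     (if X = GEmpty then return_pmf (GLeaf l)
      else (case op of
        INS \<Rightarrow> do {
          k \<leftarrow> pmf_of_set {..<node_count X};
          b \<leftarrow> pmf_of_set (UNIV :: bool set);
          return_pmf (modify_at k (\<lambda>s. if b then GNode g s (GLeaf l) else GNode g (GLeaf l) s) X) }
      | DEL \<Rightarrow> map_pmf (\<lambda>k. del_at k X) (pmf_of_set {..<node_count X})
      | SUB \<Rightarrow> map_pmf (\<lambda>j. sub_leaf j l X) (pmf_of_set {..<leaf_count X})))
   }"

definition rls_step :: "nat \<Rightarrow> nat \<Rightarrow> gptree \<Rightarrow> gptree pmf" where
  "rls_step n ell X = map_pmf
     (\<lambda>X'. if leaf_count X' \<le> ell \<and> fitness n X' \<le> fitness n X then X' else X) (hvl_prime n X)"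

fun rls_state :: "nat \<Rightarrow> nat \<Rightarrow> nat \<Rightarrow> gptree pmf" where
  "rls_state n ell 0 = return_pmf GEmpty"
| "rls_state n ell (Suc t) = rls_state n ell t \<bind> rls_step n ell"

text \<open>T_0 = number of iterations t (before the optimum is found, i.e. with parent fitness > 0)
  whose parent has fewer than ell leaves, i.e. the sum over t of the indicator of that event.
  Its expectation is, by monotone convergence / linearity, the sum of the probabilities.\<close>
definition expected_T0 :: "nat \<Rightarrow> nat \<Rightarrow> ennreal" where
  "expected_T0 n ell = (\<Sum>t. ennreal (measure_pmf.prob (rls_state n ell t)
       {X. fitness n X \<noteq> 0 \<and> leaf_count X < ell}))"

end

(* A tree of fitness f gets the potential V(f) = w(1) + ... + w(f), with w(j) = 1/j for j < n^8
   and w(j) = 8 ln n / (j ln j) otherwise; V(2^n) = O(log^2 n), and V never increases because the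
   fitness does not.  If the current tree X has fewer than ell leaves, each of the n mutations
   X := AND(X, x_l) is accepted and has probability at least 1/(24 n ell); it removes exactly the
   false positives that miss x_l.  Summed over l, every false positive counts once per variable it
   misses, and since few inputs miss few variables, f false positives miss at least
   max(f, f ln f / (8 ln n)) variables in total.  By the choice of w this makes the expected
   decrease of V at least 1/(24 n ell) in every such iteration, and additive drift bounds E[T_0]
   by 24 n ell (V(2^n) + 1). *)

theory Submission
  imports Defs "HOL-Analysis.Harmonic_Numbers"
begin

section \<open>Subsets with many missing elements\<close>

lemma sum_power_less_le_power:
  fixes n :: nat
  assumes "2 \<le> n"
  shows "(\<Sum>j<k. n ^ j) \<le> n ^ k"
proof (induction k)
  case (Suc k)
  have "(\<Sum>j<Suc k. n ^ j) \<le> n ^ k + n ^ k"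
    using Suc by simp
  also have "\<dots> \<le> n ^ Suc k"
    using mult_le_mono1[OF assms, of "n ^ k"] by (simp only: mult_2 power_Suc)
  finally show ?case .
qed simp

lemma card_subsets_small_complement:
  assumes "finite A" "2 \<le> card A"
  shows "card {S. S \<subseteq> A \<and> card (A - S) < k} \<le> card A ^ k"
proof -
  have "{S. S \<subseteq> A \<and> card (A - S) < k} = (\<lambda>T. A - T) ` {T. T \<subseteq> A \<and> card T < k}"
    by (auto simp: image_iff double_diff intro!: exI[of _ "A - _"])
  moreover have "inj_on (\<lambda>T. A - T) {T. T \<subseteq> A \<and> card T < k}"
    by (auto simp: inj_on_def double_diff)
  ultimately have "card {S. S \<subseteq> A \<and> card (A - S) < k} = card {T. T \<subseteq> A \<and> card T < k}"
    by (simp add: card_image)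
  also have "{T. T \<subseteq> A \<and> card T < k} = (\<Union>j<k. {T. T \<subseteq> A \<and> card T = j})"
    by auto
  also have "card \<dots> \<le> (\<Sum>j<k. card {T. T \<subseteq> A \<and> card T = j})"
    by (rule card_UN_le) simp
  also have "\<dots> = (\<Sum>j<k. card A choose j)"
    using n_subsets[OF assms(1)] by simp
  also have "\<dots> \<le> (\<Sum>j<k. card A ^ j)"
  proof (rule sum_mono)
    show "card A choose j \<le> card A ^ j" for j
      by (cases "j \<le> card A") (simp_all add: binomial_le_pow binomial_eq_0)
  qed
  also have "\<dots> \<le> card A ^ k"
    using sum_power_less_le_power[OF assms(2)] .
  finally show ?thesis .
qed

lemma sum_card_complement_ge:
  assumes A: "finite A" "2 \<le> card A" and F: "F \<subseteq> Pow A" and k: "2 * card A ^ k \<le> card F"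
  shows "k * card F \<le> 2 * (\<Sum>S\<in>F. card (A - S))"
proof -
  have fin: "finite F"
    using F A(1) by (meson finite_Pow_iff finite_subset)
  define B where "B = {S\<in>F. k \<le> card (A - S)}"
  have "card (F - B) \<le> card {S. S \<subseteq> A \<and> card (A - S) < k}"
  proof (rule card_mono)
    show "finite {S. S \<subseteq> A \<and> card (A - S) < k}"
      by (rule finite_subset[of _ "Pow A"]) (use A(1) in auto)
    show "F - B \<subseteq> {S. S \<subseteq> A \<and> card (A - S) < k}"
      using F by (auto simp: B_def)
  qed
  also have "\<dots> \<le> card A ^ k"
    by (rule card_subsets_small_complement[OF A])
  finally have "card (F - B) \<le> card A ^ k" .
  moreover have "card F = card B + card (F - B)"
    using card_Int_Diff[OF fin, of B] by (simp add: B_def Int_absorb1)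
  ultimately have "card F \<le> 2 * card B"
    using k by linarith
  moreover have "k * card B \<le> (\<Sum>S\<in>F. card (A - S))"
  proof -
    have "k * card B = (\<Sum>S\<in>B. k)"
      by simp
    also have "\<dots> \<le> (\<Sum>S\<in>B. card (A - S))"
      by (rule sum_mono) (simp add: B_def)
    also have "\<dots> \<le> (\<Sum>S\<in>F. card (A - S))"
      using fin by (intro sum_mono2) (auto simp: B_def)
    finally show ?thesis .
  qed
  ultimately show ?thesis
    using mult_le_mono2[of "card F" "2 * card B" k] by linarith
qed

lemma card_le_sum_card_complement:
  assumes "finite A" "F \<subseteq> Pow A - {A}"
  shows "card F \<le> (\<Sum>S\<in>F. card (A - S))"
proof -
  have "card F = (\<Sum>S\<in>F. 1)"
    by simp
  also have "\<dots> \<le> (\<Sum>S\<in>F. card (A - S))"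
  proof (rule sum_mono)
    fix S assume "S \<in> F"
    then have "A - S \<noteq> {}"
      using assms(2) by blast
    then show "1 \<le> card (A - S)"
      using assms(1) by (simp add: Suc_leI card_gt_0_iff)
  qed
  finally show ?thesis .
qed

lemma sum_card_filter_not_mem:
  assumes "finite A" "finite F"
  shows "(\<Sum>l\<in>A. card {S\<in>F. l \<notin> S}) = (\<Sum>S\<in>F. card (A - S))"
proof -
  have "(\<Sum>l\<in>A. card {S\<in>F. l \<notin> S}) = (\<Sum>l\<in>A. \<Sum>S\<in>F. if l \<notin> S then 1 else 0)"
    using assms(2) by (simp add: sum.If_cases Int_def)
  also have "\<dots> = (\<Sum>S\<in>F. \<Sum>l\<in>A. if l \<notin> S then 1 else 0)"
    by (rule sum.swap)
  also have "\<dots> = (\<Sum>S\<in>F. card (A - S))"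
    using assms(1) by (simp add: sum.If_cases Int_def set_diff_eq)
  finally show ?thesis .
qed

lemma mult_ln_le_ln_of_power_le:
  assumes "0 < n" "n ^ k \<le> j"
  shows "real k * ln (real n) \<le> ln (real j)"
proof -
  have "real n ^ k \<le> real j"
    using assms(2) by (metis of_nat_le_iff of_nat_power)
  moreover have "0 < real n ^ k"
    using assms(1) by simp
  ultimately have "ln (real n ^ k) \<le> ln (real j)"
    by (rule ln_mono)
  then show ?thesis
    using assms(1) by (simp add: ln_realpow)
qed

lemma sum_card_complement_ge_card_ln:
  assumes A: "finite A" "card A = n" "2 \<le> n" and F: "F \<subseteq> Pow A" and f: "n ^ 8 \<le> card F"
  shows "real (card F) * ln (real (card F)) / (8 * ln (real n)) \<le> real (\<Sum>S\<in>F. card (A - S))"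
proof -
  define f where "f = card F"
  define L where "L = ln (real n)"
  have L: "0 < L"
    using A(3) by (simp add: L_def)
  have f_pos: "0 < real f"
    using f A(3) less_le_trans[of 0 "n ^ 8" f] by (simp add: f_def)
  have "8 * L \<le> ln (real f)"
    using mult_ln_le_ln_of_power_le[of n 8 f] A(3) f by (simp add: L_def f_def)
  define x where "x = ln (real f) / L"
  have x8: "8 \<le> x"
    using \<open>8 * L \<le> ln (real f)\<close> L by (simp add: x_def field_simps)
  \<comment> \<open>apply sum_card_complement_ge with k = floor(log_n f) - 1\<close>
  define m where "m = nat \<lfloor>x\<rfloor>"
  have mx: "real m \<le> x" "x < real m + 1" "8 \<le> m"
    using x8 by (simp_all add: m_def) linarith
  have "ln (real n ^ m) \<le> ln (real f)"
    using mx L by (simp add: ln_realpow L_def[symmetric] x_def field_simps)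
  then have "n ^ m \<le> f"
    using A(3) f_pos by (simp del: of_nat_power add: of_nat_power[symmetric])
  moreover have "2 * n ^ (m - 1) \<le> n ^ m"
    using A(3) mx(3) mult_le_mono1[of 2 n "n ^ (m - 1)"] by (simp add: power_eq_if)
  ultimately have "(m - 1) * f \<le> 2 * (\<Sum>S\<in>F. card (A - S))"
    using sum_card_complement_ge[OF A(1) _ F, of "m - 1"] A(2) A(3) by (simp add: f_def)
  then have "real (m - 1) * real f \<le> 2 * real (\<Sum>S\<in>F. card (A - S))"
    by (metis of_nat_le_iff of_nat_mult of_nat_numeral)
  moreover have "x / 4 \<le> real (m - 1)"
    using mx by simp
  ultimately have "x / 4 * real f \<le> 2 * real (\<Sum>S\<in>F. card (A - S))"
    using f_pos by (smt (verit) mult_right_mono)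
  then show ?thesis
    using L by (simp add: x_def f_def L_def field_simps)
qed

section \<open>A potential on fitness values\<close>

text \<open>Fitness levels j \<ge> n^8 get the smaller weight 8 ln n / (j ln j): the bound
  sum_card_complement_ge_card_ln still pays for it, and its sum up to 2^n is only O(log^2 n).\<close>

definition weight :: "nat \<Rightarrow> nat \<Rightarrow> real" where
  "weight n j = (if j < n ^ 8 then 1 / real j else 8 * ln (real n) / (real j * ln (real j)))"

definition potential :: "nat \<Rightarrow> nat \<Rightarrow> real" where
  "potential n f = (\<Sum>j\<in>{1..f}. weight n j)"

lemma ln_ge_of_power_8_le:
  assumes "2 \<le> n" "n ^ 8 \<le> j"
  shows "8 * ln (real n) \<le> ln (real j)" "0 < ln (real j)"
proof -
  show "8 * ln (real n) \<le> ln (real j)"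
    using mult_ln_le_ln_of_power_le[of n 8 j] assms by simp
  moreover have "0 < ln (real n)"
    using assms(1) by simp
  ultimately show "0 < ln (real j)"
    by linarith
qed

lemma weight_nonneg: "2 \<le> n \<Longrightarrow> 0 \<le> weight n j"
  using ln_ge_of_power_8_le[of n j] by (auto simp: weight_def)

lemma weight_le_inverse:
  assumes "2 \<le> n"
  shows "weight n j \<le> 1 / real j"
proof (cases "j < n ^ 8")
  case False
  have "0 < n ^ 8"
    using assms by simp
  then have "0 < j"
    using False by linarith
  moreover have "8 * ln (real n) \<le> ln (real j)" "0 < ln (real j)"
    using False ln_ge_of_power_8_le[OF assms] by auto
  ultimately show ?thesis
    using False by (simp add: weight_def divide_simps)
qed (simp add: weight_def)

lemma weight_antimono:
  assumes n: "2 \<le> n" and j: "1 \<le> j" "j \<le> f"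
  shows "weight n f \<le> weight n j"
proof (cases "j < n ^ 8")
  case True
  have "weight n f \<le> 1 / real f"
    by (rule weight_le_inverse[OF n])
  also have "\<dots> \<le> 1 / real j"
    using j by (simp add: frac_le)
  finally show ?thesis
    using True by (simp add: weight_def)
next
  case False
  then have "\<not> f < n ^ 8" "0 < ln (real j)"
    using j ln_ge_of_power_8_le[OF n, of j] by auto
  moreover have "real j * ln (real j) \<le> real f * ln (real f)"
    using \<open>0 < ln (real j)\<close> j by (intro mult_mono) auto
  moreover have "0 \<le> ln (real n)"
    using n by simp
  ultimately show ?thesis
    using False j by (simp add: weight_def frac_le)
qed

lemma potential_Suc: "potential n (Suc f) = potential n f + weight n (Suc f)"
  by (simp add: potential_def)

lemma potential_mono: "2 \<le> n \<Longrightarrow> f \<le> g \<Longrightarrow> potential n f \<le> potential n g"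
  unfolding potential_def using weight_nonneg by (intro sum_mono2) auto

lemma potential_nonneg: "2 \<le> n \<Longrightarrow> 0 \<le> potential n f"
  using potential_mono[of n 0 f] by (simp add: potential_def)

lemma potential_diff_ge:
  assumes "2 \<le> n" "d \<le> f"
  shows "real d * weight n f \<le> potential n f - potential n (f - d)"
  using assms(2)
proof (induction d)
  case (Suc d)
  have "f - d = Suc (f - Suc d)"
    using Suc.prems by simp
  then have "potential n (f - d) = potential n (f - Suc d) + weight n (f - d)"
    by (simp add: potential_Suc)
  moreover have "weight n f \<le> weight n (f - d)"
    using weight_antimono[OF assms(1)] Suc.prems by simp
  ultimately show ?case
    using Suc by (simp add: algebra_simps)
qed simp

lemma weight_mul_sum_card_complement_ge_1:
  assumes A: "finite A" "card A = n" "2 \<le> n" and F: "F \<subseteq> Pow A - {A}" "F \<noteq> {}"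
  shows "1 \<le> weight n (card F) * real (\<Sum>S\<in>F. card (A - S))"
proof -
  have "finite F"
    using F(1) A(1) by (meson Diff_subset finite_Pow_iff finite_subset)
  then have f: "0 < card F"
    using F(2) by (simp add: card_gt_0_iff)
  show ?thesis
  proof (cases "card F < n ^ 8")
    case True
    have "real (card F) \<le> real (\<Sum>S\<in>F. card (A - S))"
      using card_le_sum_card_complement[OF A(1) F(1)] by (simp only: of_nat_le_iff)
    then show ?thesis
      using True f by (simp add: weight_def field_simps)
  next
    case False
    have lns: "0 < ln (real (card F))" "0 < ln (real n)"
      using ln_ge_of_power_8_le[OF A(3), of "card F"] False A(3) by auto
    have "1 = weight n (card F) * (real (card F) * ln (real (card F)) / (8 * ln (real n)))"
      using False lns f by (simp add: weight_def field_simps)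
    also have "\<dots> \<le> weight n (card F) * real (\<Sum>S\<in>F. card (A - S))"
      using sum_card_complement_ge_card_ln[OF A, of F] F(1) False weight_nonneg[OF A(3)]
      by (intro mult_left_mono) auto
    finally show ?thesis .
  qed
qed

lemma inverse_mul_ln_le_ln_ln_diff:
  assumes "2 \<le> j"
  shows "1 / (real (Suc j) * ln (real (Suc j))) \<le> ln (ln (real (Suc j))) - ln (ln (real j))"
proof -
  define a b where "a = ln (real j)" and "b = ln (real (Suc j))"
  have ab: "0 < a" "a < b"
    using assms by (simp_all add: a_def b_def)
  have "ln (real j / real (Suc j)) \<le> real j / real (Suc j) - 1"
    using assms by (intro ln_le_minus_one) simp
  then have "1 / real (Suc j) \<le> b - a"
    using assms by (simp add: ln_div field_simps a_def b_def)
  then have "1 / (real (Suc j) * b) \<le> (b - a) / b"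
    using ab by (simp add: divide_right_mono flip: divide_divide_eq_left)
  also have "\<dots> \<le> ln b - ln a"
    using ln_le_minus_one[of "a / b"] ab by (simp add: ln_div field_simps)
  finally show ?thesis
    by (simp add: a_def b_def)
qed

lemma potential_le_ln_ln:
  assumes n: "2 \<le> n" and N: "n ^ 8 \<le> N"
  shows "potential n N \<le> 1 + 8 * ln (real n) + 8 * ln (real n) * (ln (ln (real N)) - ln (ln (real (n ^ 8))))"
  using N
proof (induction N rule: dec_induct)
  case base
  have "potential n (n ^ 8) \<le> harm (n ^ 8)"
    unfolding potential_def harm_def using weight_le_inverse[OF n] by (intro sum_mono) (simp add: field_simps)
  also have "\<dots> \<le> 1 + ln (real (n ^ 8))"
    using euler_mascheroni_sequence_decreasing[of 1 "n ^ 8"] n by (simp add: harm_def)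
  finally show ?case
    using n by (simp add: ln_realpow)
next
  case (step N)
  have "2 \<le> N"
    using step(1) n self_le_power[of n 8] by linarith
  have "weight n (Suc N) = 8 * ln (real n) * (1 / (real (Suc N) * ln (real (Suc N))))"
    using step(1) by (simp add: weight_def)
  also have "\<dots> \<le> 8 * ln (real n) * (ln (ln (real (Suc N))) - ln (ln (real N)))"
    using inverse_mul_ln_le_ln_ln_diff[OF \<open>2 \<le> N\<close>] n by (intro mult_left_mono) auto
  finally show ?case
    using step(3) by (simp add: potential_Suc algebra_simps)
qed

lemma potential_two_power_le:
  assumes n: "2 \<le> n"
  shows "potential n (2 ^ n) \<le> 1 + 8 * ln (real n) + 8 * (ln (real n))\<^sup>2"
proof -
  define L where "L = ln (real n)"
  define N where "N = max (2 ^ n) (n ^ 8)"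
  have "ln 2 \<le> L"
    using n by (simp add: L_def)
  then have L: "1 / 8 \<le> L"
    using ln2_ge_two_thirds by linarith
  have lnln8: "0 \<le> ln (ln (real (n ^ 8)))" "ln (real (n ^ 8)) = 8 * L"
    using L n by (simp_all add: ln_realpow L_def)
  have "ln (ln (real N)) - ln (ln (real (n ^ 8))) \<le> L"
  proof (cases "2 ^ n \<le> n ^ 8")
    case False
    then have "ln (ln (real N)) = L + ln (ln 2)"
      using n by (simp add: N_def ln_realpow ln_mult L_def)
    moreover have "ln (ln (2::real)) \<le> 0"
      using ln_2_less_1 by simp
    ultimately show ?thesis
      using lnln8 by linarith
  qed (use L in \<open>simp add: N_def max_def\<close>)
  then have "8 * L * (ln (ln (real N)) - ln (ln (real (n ^ 8)))) \<le> 8 * L * L"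
    using L by (intro mult_left_mono) auto
  moreover have "potential n (2 ^ n) \<le> potential n N"
    using potential_mono[OF n] by (simp add: N_def)
  ultimately show ?thesis
    using potential_le_ln_ln[OF n, of N] by (simp add: N_def L_def power2_eq_square)
qed

section \<open>Additive drift for chains of probability mass functions\<close>

lemma pmf_bind_pmf_of_set_ge:
  assumes "finite A" "a \<in> A" "c \<le> pmf (f a) y"
  shows "c / real (card A) \<le> pmf (pmf_of_set A \<bind> f) y"
proof -
  have "c \<le> (\<Sum>x\<in>A. pmf (f x) y)"
    using assms by (intro order_trans[OF _ member_le_sum]) auto
  moreover have "pmf (pmf_of_set A \<bind> f) y = (\<Sum>x\<in>A. pmf (f x) y) / real (card A)"
    using assms(1,2) integral_pmf_of_set[of A] by (auto simp: pmf_bind)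
  ultimately show ?thesis
    by (simp add: divide_right_mono)
qed

lemma pmf_le_pmf_map_fixpoint:
  assumes "f x = x"
  shows "pmf p x \<le> pmf (map_pmf f p) x"
proof -
  have "measure p {x} \<le> measure p (f -` {x})"
    using assms by (intro measure_pmf.finite_measure_mono) auto
  then show ?thesis
    by (simp add: pmf_map measure_pmf_single)
qed

lemma sum_pmf_le_integral:
  fixes g :: "'a \<Rightarrow> real"
  assumes "finite B" "\<And>y. y \<in> set_pmf p \<Longrightarrow> 0 \<le> g y" "integrable p g"
  shows "(\<Sum>y\<in>B. g y * pmf p y) \<le> (\<integral>y. g y \<partial>p)"
proof -
  have "(\<Sum>y\<in>B. g y * pmf p y) = (\<integral>y. g y * indicator B y \<partial>p)"
    using assms(1) by (subst integral_measure_pmf_real[of B]) (auto simp: indicator_def split: if_splits)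
  also have "\<dots> \<le> (\<integral>y. g y \<partial>p)"
  proof (rule integral_mono_AE)
    show "integrable p (\<lambda>y. g y * indicator B y)"
      using assms(3) by (rule integrable_real_mult_indicator[rotated]) simp
  qed (use assms(2,3) in \<open>auto simp: AE_measure_pmf_iff indicator_def\<close>)
  finally show ?thesis .
qed

lemma nn_integral_pmf_chain_drift:
  fixes K :: "'a \<Rightarrow> 'a pmf" and p :: "nat \<Rightarrow> 'a pmf" and \<phi> :: "'a \<Rightarrow> ennreal"
  assumes p_Suc: "\<And>t. p (Suc t) = p t \<bind> K"
    and drift: "\<And>t X. X \<in> set_pmf (p t) \<Longrightarrow> (\<integral>\<^sup>+Y. \<phi> Y \<partial>K X) + c * indicator A X \<le> \<phi> X"
  shows "(\<integral>\<^sup>+X. \<phi> X \<partial>p t) + c * (\<Sum>s<t. emeasure (p s) A) \<le> (\<integral>\<^sup>+X. \<phi> X \<partial>p 0)"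
proof (induction t)
  case (Suc t)
  have "(\<integral>\<^sup>+X. \<phi> X \<partial>p (Suc t)) + c * emeasure (p t) A
      = (\<integral>\<^sup>+X. (\<integral>\<^sup>+Y. \<phi> Y \<partial>K X) + c * indicator A X \<partial>p t)"
    by (simp add: p_Suc nn_integral_add nn_integral_cmult_indicator)
  also have "\<dots> \<le> (\<integral>\<^sup>+X. \<phi> X \<partial>p t)"
    using drift by (intro nn_integral_mono_AE) (auto simp: AE_measure_pmf_iff)
  finally have step: "(\<integral>\<^sup>+X. \<phi> X \<partial>p (Suc t)) + c * emeasure (p t) A \<le> (\<integral>\<^sup>+X. \<phi> X \<partial>p t)" .
  have "(\<integral>\<^sup>+X. \<phi> X \<partial>p (Suc t)) + c * (\<Sum>s<Suc t. emeasure (p s) A)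
      = ((\<integral>\<^sup>+X. \<phi> X \<partial>p (Suc t)) + c * emeasure (p t) A) + c * (\<Sum>s<t. emeasure (p s) A)"
    by (simp add: distrib_left ac_simps)
  also have "\<dots> \<le> (\<integral>\<^sup>+X. \<phi> X \<partial>p t) + c * (\<Sum>s<t. emeasure (p s) A)"
    using step by (rule add_right_mono)
  also have "\<dots> \<le> (\<integral>\<^sup>+X. \<phi> X \<partial>p 0)"
    by (rule Suc.IH)
  finally show ?case .
qed simp

lemma pmf_additive_drift:
  fixes K :: "'a \<Rightarrow> 'a pmf" and p :: "nat \<Rightarrow> 'a pmf" and \<phi> :: "'a \<Rightarrow> real"
  assumes p_0: "p 0 = return_pmf x\<^sub>0" and p_Suc: "\<And>t. p (Suc t) = p t \<bind> K"
    and I: "x\<^sub>0 \<in> I" "\<And>X. X \<in> I \<Longrightarrow> set_pmf (K X) \<subseteq> I"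
    and \<phi>: "\<And>X. 0 \<le> \<phi> X" "\<And>X. \<phi> X \<le> B" and c: "0 < c"
    and drift: "\<And>X. X \<in> I \<Longrightarrow> (\<integral>Y. \<phi> Y \<partial>K X) + c * indicator A X \<le> \<phi> X"
  shows "(\<Sum>t. ennreal (measure_pmf.prob (p t) A)) \<le> ennreal (\<phi> x\<^sub>0 / c)"
proof -
  have support: "set_pmf (p t) \<subseteq> I" for t
    by (induction t) (use I in \<open>auto simp: p_0 p_Suc\<close>)
  have drift_ennreal:
    "(\<integral>\<^sup>+Y. ennreal (\<phi> Y) \<partial>K X) + ennreal c * indicator A X \<le> ennreal (\<phi> X)" if "X \<in> I" for X
  proof -
    have "integrable (K X) \<phi>"
      using \<phi> by (intro measure_pmf.integrable_const_bound[where B = B]) auto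
    then have "(\<integral>\<^sup>+Y. \<phi> Y \<partial>K X) = ennreal (\<integral>Y. \<phi> Y \<partial>K X)"
      using \<phi>(1) by (intro nn_integral_eq_integral) auto
    moreover have "ennreal (\<integral>Y. \<phi> Y \<partial>K X) + ennreal c * indicator A X
        = ennreal ((\<integral>Y. \<phi> Y \<partial>K X) + c * indicator A X)"
      using \<phi>(1) c by (cases "X \<in> A") (simp_all add: integral_nonneg)
    ultimately show ?thesis
      using ennreal_leI[OF drift[OF that]] by simp
  qed
  show ?thesis
  proof (intro suminf_le_const summableI)
    fix t
    define S where "S = (\<Sum>s<t. measure_pmf.prob (p s) A)"
    have "ennreal c * ennreal S \<le> (\<integral>\<^sup>+X. ennreal (\<phi> X) \<partial>p t) + ennreal c * ennreal S"
      by (rule add_increasing) simp_all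
    also have "\<dots> \<le> ennreal (\<phi> x\<^sub>0)"
      using nn_integral_pmf_chain_drift[of p K "\<lambda>X. ennreal (\<phi> X)" "ennreal c" A t] p_Suc
        support drift_ennreal
      by (auto simp: S_def p_0 measure_pmf.emeasure_eq_measure)
    finally have "ennreal c * ennreal S \<le> ennreal (\<phi> x\<^sub>0)" .
    then have "c * S \<le> \<phi> x\<^sub>0"
      using c \<phi>(1) by (simp add: ennreal_mult'[symmetric])
    then have "S \<le> \<phi> x\<^sub>0 / c"
      using c by (simp add: field_simps)
    then show "(\<Sum>s<t. ennreal (measure_pmf.prob (p s) A)) \<le> ennreal (\<phi> x\<^sub>0 / c)"
      by (simp add: S_def ennreal_leI)
  qed
qed

section \<open>Reachable trees\<close>

fun wf_tree :: "nat \<Rightarrow> gptree \<Rightarrow> bool" where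
  "wf_tree n GEmpty = False"
| "wf_tree n (GLeaf i) = (i \<in> {1..n})"
| "wf_tree n (GNode g a b) = (wf_tree n a \<and> wf_tree n b)"

lemma apply_func_True_True: "apply_func g True True"
  by (cases g) simp_all

lemma eval_tree_wf_tree_full: "wf_tree n t \<Longrightarrow> eval_tree t {1..n}"
  by (induction t) (simp_all add: apply_func_True_True)

lemma wf_tree_leaf_count_pos: "wf_tree n t \<Longrightarrow> 0 < leaf_count t"
  by (induction t) auto

lemma wf_tree_node_count_pos: "wf_tree n t \<Longrightarrow> 0 < node_count t"
  by (cases t) auto

lemma wf_tree_node_count: "wf_tree n t \<Longrightarrow> node_count t + 1 = 2 * leaf_count t"
  by (induction t) auto

lemma wf_tree_modify_at:
  "wf_tree n t \<Longrightarrow> (\<And>s. wf_tree n s \<Longrightarrow> wf_tree n (f s)) \<Longrightarrow> wf_tree n (modify_at k f t)"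
  by (induction k f t rule: modify_at.induct) auto

lemma wf_tree_del_at: "wf_tree n t \<Longrightarrow> 0 < k \<Longrightarrow> wf_tree n (del_at k t)"
  by (induction k t rule: del_at.induct) auto

lemma wf_tree_sub_leaf: "wf_tree n t \<Longrightarrow> l \<in> {1..n} \<Longrightarrow> wf_tree n (sub_leaf j l t)"
  by (induction j l t rule: sub_leaf.induct) auto

lemma set_pmf_hvl_prime_GEmpty:
  assumes "1 \<le> n" "Y \<in> set_pmf (hvl_prime n GEmpty)"
  shows "\<exists>l\<in>{1..n}. Y = GLeaf l"
  using assms by (auto simp: hvl_prime_def)

lemma set_pmf_hvl_prime_cases:
  assumes "1 \<le> n" "X \<noteq> GEmpty" "0 < leaf_count X" "0 < node_count X"
    and "Y \<in> set_pmf (hvl_prime n X)"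
  obtains (INS) k b g l where "l \<in> {1..n}"
      "Y = modify_at k (\<lambda>s. if b then GNode g s (GLeaf l) else GNode g (GLeaf l) s) X"
    | (DEL) k where "0 < k" "Y = del_at k X"
    | (DEL_root) "Y = GEmpty"
    | (SUB) j l where "l \<in> {1..n}" "Y = sub_leaf j l X"
  using assms by (auto simp: hvl_prime_def split: hvl_op.splits) (metis del_at.simps(1) gr0I)

lemma set_pmf_hvl_prime_wf_tree:
  assumes "1 \<le> n" "wf_tree n X" "Y \<in> set_pmf (hvl_prime n X)"
  shows "Y = GEmpty \<or> wf_tree n Y"
proof -
  have X: "X \<noteq> GEmpty" "0 < leaf_count X" "0 < node_count X"
    using assms(2) wf_tree_leaf_count_pos wf_tree_node_count_pos by auto
  show ?thesis
    by (rule set_pmf_hvl_prime_cases[OF assms(1) X assms(3)])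
      (use assms(2) in \<open>auto intro!: wf_tree_modify_at wf_tree_del_at wf_tree_sub_leaf\<close>)
qed

lemma set_pmf_rls_step_reachable:
  assumes "1 \<le> n" "X = GEmpty \<or> wf_tree n X" "Y \<in> set_pmf (rls_step n ell X)"
  shows "Y = GEmpty \<or> wf_tree n Y"
proof -
  obtain Y' where Y': "Y' \<in> set_pmf (hvl_prime n X)"
    and Y: "Y = (if leaf_count Y' \<le> ell \<and> fitness n Y' \<le> fitness n X then Y' else X)"
    using assms(3) unfolding rls_step_def set_map_pmf by blast
  have "Y' = GEmpty \<or> wf_tree n Y'"
    using assms(2) set_pmf_hvl_prime_GEmpty[OF assms(1)] set_pmf_hvl_prime_wf_tree[OF assms(1)] Y'
    by fastforce
  then show ?thesis
    using Y assms(2) by auto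
qed

section \<open>Drift of RLS-GP\<close>

definition false_positives :: "nat \<Rightarrow> gptree \<Rightarrow> nat set set" where
  "false_positives n X = {S. S \<subseteq> {1..n} \<and> S \<noteq> {1..n} \<and> eval_tree X S}"

lemma false_positives_subset: "false_positives n X \<subseteq> Pow {1..n} - {{1..n}}"
  by (auto simp: false_positives_def)

lemma fitness_wf_tree: "wf_tree n X \<Longrightarrow> fitness n X = card (false_positives n X)"
  using eval_tree_wf_tree_full[of n X]
  by (cases "X = GEmpty") (auto simp: fitness_def false_positives_def intro!: arg_cong[where f = card])

lemma fitness_le: "fitness n X \<le> 2 ^ n"
proof -
  have "card {S. S \<subseteq> {1..n} \<and> eval_tree X S \<noteq> (S = {1..n})} \<le> card (Pow {1..n})"
    by (intro card_mono) auto
  then show ?thesis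
    by (simp add: fitness_def card_Pow)
qed

lemma fitness_wf_tree_less: "wf_tree n X \<Longrightarrow> fitness n X < 2 ^ n"
proof -
  assume "wf_tree n X"
  have "card (false_positives n X) \<le> card (Pow {1..n} - {{1..n}})"
    using false_positives_subset by (intro card_mono) auto
  also have "\<dots> < 2 ^ n"
    by (simp add: card_Pow)
  finally show ?thesis
    using fitness_wf_tree[OF \<open>wf_tree n X\<close>] by simp
qed

definition and_leaf :: "gptree \<Rightarrow> nat \<Rightarrow> gptree" where
  "and_leaf X l = GNode FAnd X (GLeaf l)"

lemma wf_tree_and_leaf: "wf_tree n X \<Longrightarrow> l \<in> {1..n} \<Longrightarrow> wf_tree n (and_leaf X l)"
  by (simp add: and_leaf_def)

lemma fitness_and_leaf:
  assumes "wf_tree n X" "l \<in> {1..n}"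
  shows "fitness n X = fitness n (and_leaf X l) + card {S \<in> false_positives n X. l \<notin> S}"
proof -
  have "finite (false_positives n X)"
    using false_positives_subset by (rule finite_subset) simp
  then have "card (false_positives n X)
      = card {S \<in> false_positives n X. l \<in> S} + card {S \<in> false_positives n X. l \<notin> S}"
    by (subst card_Un_disjoint[symmetric]) (auto intro: arg_cong[where f = card])
  moreover have "false_positives n (and_leaf X l) = {S \<in> false_positives n X. l \<in> S}"
    by (auto simp: false_positives_def and_leaf_def)
  ultimately show ?thesis
    using fitness_wf_tree assms wf_tree_and_leaf by metis
qed

lemma pmf_hvl_prime_and_leaf_ge:
  assumes "wf_tree n X" "l \<in> {1..n}"
  shows "1 / (12 * real n * real (node_count X)) \<le> pmf (hvl_prime n X) (and_leaf X l)"
proof -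
  have X: "X \<noteq> GEmpty" "0 < node_count X"
    using assms(1) wf_tree_node_count_pos by auto
  \<comment> \<open>choose INS, the literal l, AND, the root as insertion point, and l as right child\<close>
  have "((((1 / real (card (UNIV :: bool set))) / real (card {..<node_count X})) / real (card {FAnd, FOr}))
      / real (card {1..n})) / real (card {INS, DEL, SUB}) \<le> pmf (hvl_prime n X) (and_leaf X l)"
    unfolding hvl_prime_def
    apply (rule pmf_bind_pmf_of_set_ge[where a = INS], simp, simp)
    apply (rule pmf_bind_pmf_of_set_ge[where a = l], simp, fact)
    apply (rule pmf_bind_pmf_of_set_ge[where a = FAnd], simp, simp)
    apply (simp only: X(1) if_False hvl_op.case)
    apply (rule pmf_bind_pmf_of_set_ge[where a = 0], simp, use X(2) in simp)
    apply (rule pmf_bind_pmf_of_set_ge[where a = True], simp, simp)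
    apply (simp add: and_leaf_def)
    done
  then show ?thesis
    by (simp add: field_simps)
qed

lemma pmf_rls_step_and_leaf_ge:
  assumes "2 \<le> n" "wf_tree n X" "l \<in> {1..n}" "leaf_count X < ell"
  shows "1 / (24 * real n * real ell) \<le> pmf (rls_step n ell X) (and_leaf X l)"
proof -
  have "0 < node_count X" "real (node_count X) \<le> 2 * real ell"
    using wf_tree_node_count_pos[OF assms(2)] wf_tree_node_count[OF assms(2)] assms(4) by linarith+
  then have "1 / (24 * real n * real ell) \<le> 1 / (12 * real n * real (node_count X))"
    using assms(1) by (intro divide_left_mono) (auto simp: field_simps)
  also have "\<dots> \<le> pmf (hvl_prime n X) (and_leaf X l)"
    using pmf_hvl_prime_and_leaf_ge[OF assms(2,3)] .
  also have "\<dots> \<le> pmf (rls_step n ell X) (and_leaf X l)"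
    unfolding rls_step_def
    using fitness_and_leaf[OF assms(2,3)] assms(4) by (intro pmf_le_pmf_map_fixpoint) (simp add: and_leaf_def)
  finally show ?thesis .
qed

text \<open>Among reachable trees only the empty one has fitness 2^n; the extra 1 makes its
  first step a unit drop.\<close>

definition tree_potential :: "nat \<Rightarrow> gptree \<Rightarrow> real" where
  "tree_potential n X =
    (if fitness n X < 2 ^ n then potential n (fitness n X) else potential n (2 ^ n) + 1)"

lemma tree_potential_mono:
  "2 \<le> n \<Longrightarrow> fitness n Y \<le> fitness n X \<Longrightarrow> tree_potential n Y \<le> tree_potential n X"
  using potential_mono[of n "fitness n Y" "fitness n X"] potential_mono[of n "fitness n Y" "2 ^ n"]
  by (auto simp: tree_potential_def)

lemma tree_potential_nonneg: "2 \<le> n \<Longrightarrow> 0 \<le> tree_potential n X"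
  using potential_nonneg[of n] by (simp add: tree_potential_def)

lemma tree_potential_le: "2 \<le> n \<Longrightarrow> tree_potential n X \<le> potential n (2 ^ n) + 1"
  using potential_mono[of n "fitness n X" "2 ^ n"] fitness_le[of n X] by (simp add: tree_potential_def)

lemma tree_potential_rls_step_le:
  "2 \<le> n \<Longrightarrow> Y \<in> set_pmf (rls_step n ell X) \<Longrightarrow> tree_potential n Y \<le> tree_potential n X"
  using tree_potential_mono[of n] by (auto simp: rls_step_def split: if_splits)

lemma integrable_tree_potential: "2 \<le> n \<Longrightarrow> integrable (measure_pmf p) (tree_potential n)"
  using tree_potential_nonneg tree_potential_le
  by (intro measure_pmf.integrable_const_bound[where B = "potential n (2 ^ n) + 1"]) auto

lemma tree_potential_and_leaf:
  assumes "2 \<le> n" "wf_tree n X" "l \<in> {1..n}"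
  shows "real (card {S \<in> false_positives n X. l \<notin> S}) * weight n (fitness n X)
    \<le> tree_potential n X - tree_potential n (and_leaf X l)"
proof -
  define d where "d = card {S \<in> false_positives n X. l \<notin> S}"
  have "fitness n (and_leaf X l) = fitness n X - d" "d \<le> fitness n X"
    using fitness_and_leaf[OF assms(2,3)] by (simp_all add: d_def)
  then show ?thesis
    using potential_diff_ge[OF assms(1) \<open>d \<le> fitness n X\<close>] fitness_wf_tree_less[OF assms(2)]
      fitness_wf_tree_less[OF wf_tree_and_leaf[OF assms(2,3)]]
    by (simp add: tree_potential_def d_def)
qed

lemma weight_mul_sum_card_false_positives_ge_1:
  assumes "2 \<le> n" "wf_tree n X" "fitness n X \<noteq> 0"
  shows "1 \<le> weight n (fitness n X) * real (\<Sum>l\<in>{1..n}. card {S \<in> false_positives n X. l \<notin> S})"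
proof -
  have "finite (false_positives n X)"
    using false_positives_subset by (rule finite_subset) simp
  moreover have "false_positives n X \<noteq> {}"
    using assms(3) fitness_wf_tree[OF assms(2)] by auto
  ultimately show ?thesis
    using weight_mul_sum_card_complement_ge_1[of "{1..n}" n, OF _ _ assms(1) false_positives_subset]
      sum_card_filter_not_mem[of "{1..n}" "false_positives n X"] fitness_wf_tree[OF assms(2)]
    by simp
qed

lemma rls_step_drift_wf_tree:
  assumes n: "2 \<le> n" and X: "wf_tree n X" "fitness n X \<noteq> 0" "leaf_count X < ell"
  shows "(\<integral>Y. tree_potential n Y \<partial>rls_step n ell X) + 1 / (24 * real n * real ell) \<le> tree_potential n X"
proof -
  let ?\<phi> = "tree_potential n" and ?\<mu> = "rls_step n ell X"
  define c where "c = 1 / (24 * real n * real ell)"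
  define d where "d l = real (card {S \<in> false_positives n X. l \<notin> S})" for l
  have "1 \<le> weight n (fitness n X) * (\<Sum>l\<in>{1..n}. d l)"
    using weight_mul_sum_card_false_positives_ge_1[OF assms(1-3)] by (simp add: d_def)
  then have "c \<le> c * (weight n (fitness n X) * (\<Sum>l\<in>{1..n}. d l))"
    using mult_left_mono[of 1 _ c] by (simp add: c_def)
  also have "\<dots> = (\<Sum>l\<in>{1..n}. d l * weight n (fitness n X) * c)"
    by (simp add: sum_distrib_left sum_distrib_right mult_ac)
  also have "\<dots> \<le> (\<Sum>l\<in>{1..n}. (?\<phi> X - ?\<phi> (and_leaf X l)) * pmf ?\<mu> (and_leaf X l))"
  proof (rule sum_mono)
    fix l assume l: "l \<in> {1..n}"
    have "0 \<le> d l * weight n (fitness n X)"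
      using weight_nonneg[OF n] by (simp add: d_def)
    then show "d l * weight n (fitness n X) * c \<le> (?\<phi> X - ?\<phi> (and_leaf X l)) * pmf ?\<mu> (and_leaf X l)"
      using tree_potential_and_leaf[OF n X(1) l] pmf_rls_step_and_leaf_ge[OF n X(1) l X(3)]
      by (intro mult_mono) (auto simp: d_def c_def)
  qed
  also have "\<dots> = (\<Sum>Y\<in>and_leaf X ` {1..n}. (?\<phi> X - ?\<phi> Y) * pmf ?\<mu> Y)"
    by (rule sum.reindex_cong[symmetric]) (auto simp: inj_on_def and_leaf_def)
  \<comment> \<open>all other outcomes of the step are ignored: they do not increase the potential\<close>
  also have "\<dots> \<le> (\<integral>Y. ?\<phi> X - ?\<phi> Y \<partial>?\<mu>)"
    using tree_potential_rls_step_le[OF n] integrable_tree_potential[OF n]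
    by (intro sum_pmf_le_integral) auto
  also have "\<dots> = ?\<phi> X - (\<integral>Y. ?\<phi> Y \<partial>?\<mu>)"
    using integrable_tree_potential[OF n] by simp
  finally show ?thesis
    by (simp add: c_def)
qed

lemma rls_step_drift_GEmpty:
  assumes "2 \<le> n" "1 \<le> ell"
  shows "(\<integral>Y. tree_potential n Y \<partial>rls_step n ell GEmpty) + 1 \<le> tree_potential n GEmpty"
proof -
  have "tree_potential n Y \<le> potential n (2 ^ n)" if step: "Y \<in> set_pmf (rls_step n ell GEmpty)" for Y
  proof -
    obtain Y' where Y': "Y' \<in> set_pmf (hvl_prime n GEmpty)"
      and Y: "Y = (if leaf_count Y' \<le> ell \<and> fitness n Y' \<le> fitness n GEmpty then Y' else GEmpty)"
      using step unfolding rls_step_def set_map_pmf by blast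
    obtain l where "l \<in> {1..n}" "Y' = GLeaf l"
      using set_pmf_hvl_prime_GEmpty[OF _ Y'] assms(1) by auto
    then have "wf_tree n Y"
      using Y assms(2) fitness_le[of n "GLeaf l"] by (simp add: fitness_def)
    then show ?thesis
      using fitness_wf_tree_less[of n Y] potential_mono[OF assms(1), of "fitness n Y" "2 ^ n"]
      by (simp add: tree_potential_def)
  qed
  then have "(\<integral>Y. tree_potential n Y \<partial>rls_step n ell GEmpty) \<le> potential n (2 ^ n)"
    using integrable_tree_potential[OF assms(1)]
    by (intro measure_pmf.integral_le_const) (auto simp: AE_measure_pmf_iff)
  then show ?thesis
    by (simp add: tree_potential_def fitness_def)
qed

lemma rls_step_drift:
  assumes n: "2 \<le> n" and ell: "1 \<le> ell" and X: "X = GEmpty \<or> wf_tree n X"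
  shows "(\<integral>Y. tree_potential n Y \<partial>rls_step n ell X)
    + 1 / (24 * real n * real ell) * indicator {X. fitness n X \<noteq> 0 \<and> leaf_count X < ell} X
    \<le> tree_potential n X"
proof (cases "fitness n X \<noteq> 0 \<and> leaf_count X < ell")
  case True
  then have "indicator {X. fitness n X \<noteq> 0 \<and> leaf_count X < ell} X = (1::real)"
    by simp
  moreover have "(\<integral>Y. tree_potential n Y \<partial>rls_step n ell X) + 1 / (24 * real n * real ell)
      \<le> tree_potential n X"
  proof (cases "X = GEmpty")
    case True
    have "1 \<le> real n * real ell"
      using n ell mult_mono[of 1 "real n" 1 "real ell"] by simp
    then have "1 / (24 * real n * real ell) \<le> 1"
      by (simp add: field_simps)
    then show ?thesis
      using True rls_step_drift_GEmpty[OF n ell] by simp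
  next
    case False
    then show ?thesis
      using \<open>fitness n X \<noteq> 0 \<and> leaf_count X < ell\<close> X rls_step_drift_wf_tree[OF n] by simp
  qed
  ultimately show ?thesis
    by simp
next
  case False
  have "(\<integral>Y. tree_potential n Y \<partial>rls_step n ell X) \<le> tree_potential n X"
    using integrable_tree_potential[OF n] tree_potential_rls_step_le[OF n]
    by (intro measure_pmf.integral_le_const) (auto simp: AE_measure_pmf_iff)
  then show ?thesis
    using False by simp
qed

lemma tree_potential_GEmpty_le:
  assumes "3 \<le> n"
  shows "tree_potential n GEmpty \<le> 18 * (ln (real n))\<^sup>2"
proof -
  have "1 \<le> ln (3::real)"
    using exp_le by (subst ln_ge_iff) auto
  also have "\<dots> \<le> ln (real n)"
    using assms by simp
  finally have L: "1 \<le> ln (real n)" .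
  then have "ln (real n) \<le> (ln (real n))\<^sup>2"
    by (simp add: power2_eq_square)
  moreover have "tree_potential n GEmpty = potential n (2 ^ n) + 1"
    by (simp add: tree_potential_def fitness_def)
  ultimately show ?thesis
    using potential_two_power_le[of n] assms L one_le_power[OF L, of 2] by simp
qed

theorem lemma5:
  shows "\<exists>C::real. C > 0 \<and> (\<exists>N::nat. \<forall>n \<ge> N. \<forall>ell \<ge> n.
           expected_T0 n ell \<le> ennreal (C * real ell * real n * (ln (real n))\<^sup>2))"
proof (intro exI conjI allI impI)
  fix n ell :: nat
  assume n: "3 \<le> n" and ell: "n \<le> ell"
  have "expected_T0 n ell \<le> ennreal (tree_potential n GEmpty / (1 / (24 * real n * real ell)))"
    unfolding expected_T0_def
  proof (rule pmf_additive_drift[where B = "potential n (2 ^ n) + 1"])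
    show "set_pmf (rls_step n ell X) \<subseteq> {X. X = GEmpty \<or> wf_tree n X}"
      if "X \<in> {X. X = GEmpty \<or> wf_tree n X}" for X
      using n that set_pmf_rls_step_reachable[of n] by auto
  qed (use n ell tree_potential_nonneg tree_potential_le rls_step_drift in auto)
  also have "\<dots> \<le> ennreal (432 * real ell * real n * (ln (real n))\<^sup>2)"
    using tree_potential_GEmpty_le[OF n] n ell by (intro ennreal_leI) (simp add: field_simps)
  finally show "expected_T0 n ell \<le> ennreal (432 * real ell * real n * (ln (real n))\<^sup>2)" .
qed simp

end
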